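(* Let $\tau>2$ and $h>0$. Let $p>q$ be real numbers and $\alpha_p,\alpha_q$ nonzero complex numbers, and suppose there is a constant $C_\tau>0$ such that for all $a,b\in\mathbb{C}$, $$|a|^2+|b|^2\le C_\tau\int_0^\tau\left[\frac1{h^2}\left|a\alpha_pe^{ipt}+b\alpha_qe^{iqt}\right|^2+\left|a\alpha_p\,p\,e^{ipt}+b\alpha_q\,q\,e^{iqt}\right|^2\right]dt.$$ Then $$|p-q|\ge\sqrt{\frac{\frac1{2C_\tau\tau}\left(\frac1{|\alpha_p|^2}+\frac1{|\alpha_q|^2}\right)}{1+\frac16\tau^2\left(\frac1{h^2}+2(|q|^2+|p|^2)\right)}}.$$ *)

theory Defs
  imports "HOL-Analysis.Analysis"
begin

end

theory Submission
  imports Defs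
begin

text \<open>Test the inequality with \<open>a = 1/\<alpha>p\<close> and \<open>b = -1/\<alpha>q\<close>. The left side becomes
  \<open>1/|\<alpha>p|^2 + 1/|\<alpha>q|^2\<close>, and the integrand becomes
  \<open>h^-2 |e^(ipt) - e^(iqt)|^2 + |p e^(ipt) - q e^(iqt)|^2\<close>, which is small when the two frequencies
  are close: \<open>|e^(ipt) - e^(iqt)| \<le> (p - q) t\<close> and \<open>|p e^(ipt) - q e^(iqt)| \<le> |p| (p - q) t + (p - q)\<close>.
  Integrating over \<open>[0, \<tau>]\<close> bounds the right side by \<open>C (p - q)^2 (2\<tau> + \<tau>^3 (h^-2 + 2p^2) / 3)\<close>,
  and solving for \<open>p - q\<close> gives the estimate.\<close>

lemma norm_exp_i_diff_le:
  "cmod (exp (\<i> * of_real x) - exp (\<i> * of_real y)) \<le> \<bar>x - y\<bar>"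
proof -
  have "exp (\<i> * of_real x) - exp (\<i> * of_real y) = exp (\<i> * of_real y) * (exp (\<i> * of_real (x - y)) - 1)"
    by (simp add: algebra_simps flip: exp_add)
  then have "cmod (exp (\<i> * of_real x) - exp (\<i> * of_real y)) = cmod (exp (\<i> * of_real (x - y)) - 1)"
    by (simp add: norm_mult)
  also have "\<dots> = 2 * \<bar>sin ((x - y) / 2)\<bar>"
    by (rule dist_exp_i_1)
  also have "\<dots> \<le> \<bar>x - y\<bar>"
    using abs_sin_x_le_abs_x[of "(x - y) / 2"] by simp
  finally show ?thesis .
qed

lemma norm_scaled_exp_i_diff_le:
  "cmod (of_real p * exp (\<i> * of_real x) - of_real q * exp (\<i> * of_real y)) \<le> \<bar>p\<bar> * \<bar>x - y\<bar> + \<bar>p - q\<bar>"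
proof -
  have "of_real p * exp (\<i> * of_real x) - of_real q * exp (\<i> * of_real y)
      = of_real p * (exp (\<i> * of_real x) - exp (\<i> * of_real y)) + of_real (p - q) * exp (\<i> * of_real y)"
    by (simp add: algebra_simps)
  also have "cmod \<dots> \<le> cmod (of_real p * (exp (\<i> * of_real x) - exp (\<i> * of_real y)))
      + cmod (of_real (p - q) * exp (\<i> * of_real y))"
    by (rule norm_triangle_ineq)
  also have "\<dots> = \<bar>p\<bar> * cmod (exp (\<i> * of_real x) - exp (\<i> * of_real y)) + \<bar>p - q\<bar>"
    by (simp add: norm_mult del: of_real_diff)
  also have "\<dots> \<le> \<bar>p\<bar> * \<bar>x - y\<bar> + \<bar>p - q\<bar>"
    using norm_exp_i_diff_le by (simp add: mult_left_mono)
  finally show ?thesis .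
qed

definition two_frequency_integrand :: "real \<Rightarrow> real \<Rightarrow> real \<Rightarrow> real \<Rightarrow> real" where
  "two_frequency_integrand h p q t =
    (1 / h^2) * (cmod (exp (\<i> * of_real (p * t)) - exp (\<i> * of_real (q * t))))^2
    + (cmod (of_real p * exp (\<i> * of_real (p * t)) - of_real q * exp (\<i> * of_real (q * t))))^2"

lemma continuous_on_two_frequency_integrand: "continuous_on S (two_frequency_integrand h p q)"
  unfolding two_frequency_integrand_def by (intro continuous_intros)

lemma two_frequency_integrand_le:
  assumes "t \<ge> 0"
  shows "two_frequency_integrand h p q t \<le> (p - q)^2 * ((1 / h^2 + 2 * p^2) * t^2 + 2)"
proof -
  define X where "X = cmod (exp (\<i> * of_real (p * t)) - exp (\<i> * of_real (q * t)))"
  define Y where "Y = cmod (of_real p * exp (\<i> * of_real (p * t)) - of_real q * exp (\<i> * of_real (q * t)))"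
  have "\<bar>p * t - q * t\<bar> = \<bar>p - q\<bar> * t"
    using assms by (simp add: abs_mult flip: left_diff_distrib)
  then have X_le: "X \<le> \<bar>p - q\<bar> * t" and Y_le: "Y \<le> \<bar>p\<bar> * (\<bar>p - q\<bar> * t) + \<bar>p - q\<bar>"
    unfolding X_def Y_def using norm_exp_i_diff_le norm_scaled_exp_i_diff_le by metis+
  have "X^2 \<le> (\<bar>p - q\<bar> * t)^2"
    using X_le by (rule power_mono) (simp add: X_def)
  then have "X^2 \<le> (p - q)^2 * t^2"
    by (simp add: power_mult_distrib)
  moreover have "Y^2 \<le> (\<bar>p\<bar> * (\<bar>p - q\<bar> * t) + \<bar>p - q\<bar>)^2"
    using Y_le by (rule power_mono) (simp add: Y_def)
  moreover have "(\<bar>p\<bar> * (\<bar>p - q\<bar> * t) + \<bar>p - q\<bar>)^2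
      \<le> 2 * (\<bar>p\<bar> * (\<bar>p - q\<bar> * t))^2 + 2 * \<bar>p - q\<bar>^2"
    using sum_squares_bound[of "\<bar>p\<bar> * (\<bar>p - q\<bar> * t)" "\<bar>p - q\<bar>"] by (simp add: power2_sum)
  moreover have "2 * (\<bar>p\<bar> * (\<bar>p - q\<bar> * t))^2 + 2 * \<bar>p - q\<bar>^2 = (p - q)^2 * (2 * p^2 * t^2 + 2)"
    by (simp add: algebra_simps)
  ultimately have "(1 / h^2) * X^2 + Y^2 \<le> (1 / h^2) * ((p - q)^2 * t^2) + (p - q)^2 * (2 * p^2 * t^2 + 2)"
    by (intro add_mono mult_left_mono) auto
  then show ?thesis
    unfolding two_frequency_integrand_def X_def Y_def by (simp add: algebra_simps)
qed

lemma has_integral_quadratic: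
  fixes a b A B :: real
  assumes "a \<le> b"
  shows "((\<lambda>t. A * t^2 + B) has_integral (A * (b^3 - a^3) / 3 + B * (b - a))) {a..b}"
proof -
  have "((\<lambda>t. A * t^2 + B) has_integral ((\<lambda>t. A * t^3 / 3 + B * t) b - (\<lambda>t. A * t^3 / 3 + B * t) a)) {a..b}"
    using assms
    by (intro fundamental_theorem_of_calculus)
       (auto intro!: derivative_eq_intros simp flip: has_real_derivative_iff_has_vector_derivative)
  then show ?thesis
    by (simp add: algebra_simps diff_divide_distrib)
qed

lemma integral_two_frequency_integrand_le:
  assumes "tau \<ge> 0"
  shows "integral {0..tau} (two_frequency_integrand h p q)
    \<le> (p - q)^2 * ((1 / h^2 + 2 * p^2) * tau^3 / 3 + 2 * tau)"
proof -
  let ?A = "(p - q)^2 * (1 / h^2 + 2 * p^2)" and ?B = "2 * (p - q)^2"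
  have "integral {0..tau} (two_frequency_integrand h p q) \<le> ?A * (tau^3 - 0^3) / 3 + ?B * (tau - 0)"
  proof (rule has_integral_le)
    show "(two_frequency_integrand h p q has_integral integral {0..tau} (two_frequency_integrand h p q)) {0..tau}"
      by (intro integrable_integral integrable_continuous_real continuous_on_two_frequency_integrand)
    show "((\<lambda>t. ?A * t^2 + ?B) has_integral ?A * (tau^3 - 0^3) / 3 + ?B * (tau - 0)) {0..tau}"
      using assms by (rule has_integral_quadratic)
    show "two_frequency_integrand h p q t \<le> ?A * t^2 + ?B" if "t \<in> {0..tau}" for t
    proof -
      have "two_frequency_integrand h p q t \<le> (p - q)^2 * ((1 / h^2 + 2 * p^2) * t^2 + 2)"
        using that by (intro two_frequency_integrand_le) simp
      also have "\<dots> = ?A * t^2 + ?B"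
        by (simp add: algebra_simps)
      finally show ?thesis .
    qed
  qed
  then show ?thesis
    by (simp add: algebra_simps)
qed

theorem lemma5:
  fixes tau h p q C :: real and \<alpha>p \<alpha>q :: complex
  assumes "tau > 2" and "h > 0" and "p > q"
    and "\<alpha>p \<noteq> 0" and "\<alpha>q \<noteq> 0"
    and "C > 0"
    and obs: "\<And>a b :: complex. (cmod a)^2 + (cmod b)^2 \<le> C * integral {0..tau}
      (\<lambda>t. (1 / h^2) * (cmod (a * \<alpha>p * exp (\<i> * of_real (p * t)) + b * \<alpha>q * exp (\<i> * of_real (q * t))))^2
           + (cmod (a * \<alpha>p * of_real p * exp (\<i> * of_real (p * t)) + b * \<alpha>q * of_real q * exp (\<i> * of_real (q * t))))^2)"
  shows "\<bar>p - q\<bar> \<ge> sqrt ((1 / (2 * C * tau) * (1 / (cmod \<alpha>p)^2 + 1 / (cmod \<alpha>q)^2))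
            / (1 + (1/6) * tau^2 * (1 / h^2 + 2 * (\<bar>q\<bar>^2 + \<bar>p\<bar>^2))))"
proof -
  define S where "S = 1 / (cmod \<alpha>p)^2 + 1 / (cmod \<alpha>q)^2"
  define D where "D = 1 + (1/6) * tau^2 * (1 / h^2 + 2 * (\<bar>q\<bar>^2 + \<bar>p\<bar>^2))"
  have tau_pos: "tau > 0" and D_pos: "D > 0"
    using assms(1) by (auto simp: D_def intro!: add_pos_nonneg)
  have "S \<le> C * integral {0..tau} (two_frequency_integrand h p q)"
    using obs[of "1 / \<alpha>p" "- 1 / \<alpha>q"] assms(4,5)
    by (simp add: S_def two_frequency_integrand_def[abs_def] norm_divide power_divide)
  also have "\<dots> \<le> C * ((p - q)^2 * (2 * tau * D))"
  proof (intro mult_left_mono)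
    have "2 * tau * D = (1 / h^2 + 2 * p^2) * tau^3 / 3 + 2 * tau + 2 * q^2 * tau^3 / 3"
      using assms(2) by (simp add: D_def field_simps power2_eq_square power3_eq_cube)
    then have "(1 / h^2 + 2 * p^2) * tau^3 / 3 + 2 * tau \<le> 2 * tau * D"
      using tau_pos by simp
    then show "integral {0..tau} (two_frequency_integrand h p q) \<le> (p - q)^2 * (2 * tau * D)"
      using integral_two_frequency_integrand_le[of tau h p q] tau_pos
      by (meson mult_left_mono order_trans zero_le_power2 less_imp_le)
  qed (use assms(6) in simp)
  finally have "(1 / (2 * C * tau) * S) / D \<le> (p - q)^2"
    using assms(6) tau_pos D_pos by (simp add: pos_divide_le_eq mult_ac)
  then show ?thesis
    unfolding S_def D_def by (metis real_sqrt_abs real_sqrt_le_mono)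
qed

end
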